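(* Let $a^2\ge0$, $b^2,c^2>0$ and $$f(x,y)=-\frac{a^2}2(x^2+y^2)+\frac{c^2}4(x^2+y^2)^2-\frac{b^2}{3\sqrt6}y(y^2-3x^2),\qquad (x,y)\in\mathbb R^2.$$ Then $\min_{\mathbb R^2}f=-\frac{a^2}{3}s_+^2-\frac{2b^2}{27}s_+^3+\frac{c^2}{9}s_+^4$, and this minimum is attained at, and only at, the three points $\big(0,\frac{2}{\sqrt6}s_+\big)$ and $\big(\pm\frac1{\sqrt2}s_+,-\frac1{\sqrt6}s_+\big)$. Furthermore, the Hessian of $f$ is positive definite at each of these three points.
   Context: $s_+=\frac{b^2+\sqrt{b^4+24a^2c^2}}{4c^2}$. *)

theory Defs
  imports "HOL-Analysis.Analysis"
begin

definition fabc :: "real \<Rightarrow> real \<Rightarrow> real \<Rightarrow> real \<times> real \<Rightarrow> real" where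
  "fabc a b c p = (case p of (x, y) \<Rightarrow>
      - (a^2 / 2) * (x^2 + y^2) + (c^2 / 4) * (x^2 + y^2)^2
      - (b^2 / (3 * sqrt 6)) * y * (y^2 - 3 * x^2))"

definition s_plus :: "real \<Rightarrow> real \<Rightarrow> real \<Rightarrow> real" where
  "s_plus a b c = (b^2 + sqrt (b^4 + 24 * a^2 * c^2)) / (4 * c^2)"

definition pd1 :: "(real \<times> real \<Rightarrow> real) \<Rightarrow> real \<times> real \<Rightarrow> real" where
  "pd1 g p = deriv (\<lambda>t. g (t, snd p)) (fst p)"

definition pd2 :: "(real \<times> real \<Rightarrow> real) \<Rightarrow> real \<times> real \<Rightarrow> real" where
  "pd2 g p = deriv (\<lambda>t. g (fst p, t)) (snd p)"

definition hessian :: "(real \<times> real \<Rightarrow> real) \<Rightarrow> real \<times> real \<Rightarrow> nat \<Rightarrow> nat \<Rightarrow> real" where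
  "hessian g p i j =
     (let d = (\<lambda>k h. if k = 1 then pd1 h else pd2 h) in d i (d j g) p)"

definition hessian_pos_def :: "(real \<times> real \<Rightarrow> real) \<Rightarrow> real \<times> real \<Rightarrow> bool" where
  "hessian_pos_def g p \<longleftrightarrow>
     (\<forall>v :: nat \<Rightarrow> real. (v 1, v 2) \<noteq> (0, 0) \<longrightarrow>
        (\<Sum>i\<in>{1,2}. \<Sum>j\<in>{1,2}. v i * hessian g p i j * v j) > 0)"

end

theory Submission
  imports Defs
begin

text \<open>In polar form \<open>f = -a\<^sup>2 r\<^sup>2/2 + c\<^sup>2 r\<^sup>4/4 - b\<^sup>2 r\<^sup>3 sin(3\<theta>)/(3\<surd>6)\<close>, since
  \<open>y(y\<^sup>2 - 3x\<^sup>2) = r\<^sup>3 sin(3\<theta>)\<close>. For fixed \<open>r\<close> the minimum is taken where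
  \<open>sin(3\<theta>) = 1\<close>, i.e. at the vertices of an equilateral triangle, and there \<open>f\<close> agrees with
  its restriction to the positive \<open>y\<close>-axis. This quartic in \<open>r\<close> has a unique minimum on
  \<open>r \<ge> 0\<close>, at the positive root \<open>q = 2s\<^sub>+/\<surd>6\<close> of its derivative; subtracting the minimum
  value leaves \<open>(r - q)\<^sup>2\<close> times a quadratic with positive coefficients.\<close>

definition triangle_vertices :: "real \<Rightarrow> (real \<times> real) set" where
  "triangle_vertices q = {(0, q), (sqrt 3 / 2 * q, - q / 2), (- sqrt 3 / 2 * q, - q / 2)}"

lemma trigonal_cubic_defect:
  fixes x y :: real
  shows "(x\<^sup>2 + y\<^sup>2) ^ 3 - (y * (y\<^sup>2 - 3 * x\<^sup>2))\<^sup>2 = x\<^sup>2 * (x\<^sup>2 - 3 * y\<^sup>2)\<^sup>2"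
  by (simp add: power2_eq_square power3_eq_cube algebra_simps)

lemma trigonal_cubic_le:
  fixes x y :: real
  shows "y * (y\<^sup>2 - 3 * x\<^sup>2) \<le> sqrt (x\<^sup>2 + y\<^sup>2) ^ 3"
proof (rule power2_le_imp_le)
  have "(y * (y\<^sup>2 - 3 * x\<^sup>2))\<^sup>2 \<le> (x\<^sup>2 + y\<^sup>2) ^ 3"
    using trigonal_cubic_defect[of x y] by (metis diff_ge_0_iff_ge zero_le_mult_iff zero_le_power2)
  also have "(x\<^sup>2 + y\<^sup>2) ^ 3 = (sqrt (x\<^sup>2 + y\<^sup>2) ^ 2) ^ 3"
    by simp
  also have "\<dots> = (sqrt (x\<^sup>2 + y\<^sup>2) ^ 3)\<^sup>2"
    by (metis power_mult mult.commute)
  finally show "(y * (y\<^sup>2 - 3 * x\<^sup>2))\<^sup>2 \<le> (sqrt (x\<^sup>2 + y\<^sup>2) ^ 3)\<^sup>2" .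
qed simp

lemma trigonal_cubic_eq_on_circle_iff:
  fixes q x y :: real
  assumes "0 \<le> q"
  shows "x\<^sup>2 + y\<^sup>2 = q\<^sup>2 \<and> y * (y\<^sup>2 - 3 * x\<^sup>2) = q ^ 3 \<longleftrightarrow> (x, y) \<in> triangle_vertices q"
proof
  assume circle: "x\<^sup>2 + y\<^sup>2 = q\<^sup>2 \<and> y * (y\<^sup>2 - 3 * x\<^sup>2) = q ^ 3"
  then have "x\<^sup>2 * (x\<^sup>2 - 3 * y\<^sup>2)\<^sup>2 = 0"
    using trigonal_cubic_defect[of x y] by (metis diff_self power_mult mult.commute)
  then have "x = 0 \<or> x\<^sup>2 = 3 * y\<^sup>2" by simp
  then consider "x = 0" | "x\<^sup>2 = 3 * y\<^sup>2" by blast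
  then show "(x, y) \<in> triangle_vertices q"
  proof cases
    case 1
    then have "y ^ 3 = y * (y\<^sup>2 - 3 * x\<^sup>2)" by (simp add: power3_eq_cube power2_eq_square)
    with circle have "y ^ 3 = q ^ 3" by simp
    then have "y = q" by (metis odd_real_root_power_cancel odd_numeral)
    with 1 show ?thesis by (simp add: triangle_vertices_def)
  next
    case 2
    then have "(-2 * y) ^ 3 = y * (y\<^sup>2 - 3 * x\<^sup>2)"
      by (simp add: power3_eq_cube power2_eq_square algebra_simps)
    with circle have "(-2 * y) ^ 3 = q ^ 3" by simp
    then have "-2 * y = q" by (metis odd_real_root_power_cancel odd_numeral)
    then have y: "y = - q / 2" by simp
    with 2 have "x\<^sup>2 = (sqrt 3 / 2 * q)\<^sup>2" by (simp add: power_mult_distrib power_divide)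
    then have "x = sqrt 3 / 2 * q \<or> x = - sqrt 3 / 2 * q" by (auto simp: power2_eq_iff)
    with y show ?thesis by (auto simp: triangle_vertices_def)
  qed
next
  assume "(x, y) \<in> triangle_vertices q"
  moreover have "(sqrt 3 / 2 * q)\<^sup>2 = 3 / 4 * q\<^sup>2"
    by (simp add: power_mult_distrib power_divide)
  ultimately consider "x = 0" "y = q" | "x\<^sup>2 = 3 / 4 * q\<^sup>2" "y = - q / 2"
    unfolding triangle_vertices_def by fastforce
  then show "x\<^sup>2 + y\<^sup>2 = q\<^sup>2 \<and> y * (y\<^sup>2 - 3 * x\<^sup>2) = q ^ 3"
  proof cases
    case 1
    then show ?thesis by (simp add: power3_eq_cube power2_eq_square)
  next
    case 2
    then show ?thesis by (simp add: power3_eq_cube power2_eq_square algebra_simps)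
  qed
qed

lemma fabc_polar_decomposition:
  "fabc a b c (x, y) = fabc a b c (0, sqrt (x\<^sup>2 + y\<^sup>2))
     + b\<^sup>2 / (3 * sqrt 6) * (sqrt (x\<^sup>2 + y\<^sup>2) ^ 3 - y * (y\<^sup>2 - 3 * x\<^sup>2))"
proof -
  define r where "r = sqrt (x\<^sup>2 + y\<^sup>2)"
  have r2: "x\<^sup>2 + y\<^sup>2 = r\<^sup>2" unfolding r_def by simp
  have "fabc a b c (x, y) = - (a\<^sup>2 / 2) * r\<^sup>2 + (c\<^sup>2 / 4) * (r\<^sup>2)\<^sup>2
      - (b\<^sup>2 / (3 * sqrt 6)) * (y * (y\<^sup>2 - 3 * x\<^sup>2))"
    unfolding fabc_def r2[symmetric] by (simp add: mult.assoc)
  then show ?thesis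
    unfolding r_def[symmetric] by (simp add: fabc_def power2_eq_square power3_eq_cube algebra_simps)
qed

lemma fabc_ge_on_axis: "fabc a b c (0, sqrt (x\<^sup>2 + y\<^sup>2)) \<le> fabc a b c (x, y)"
proof -
  have "0 \<le> b\<^sup>2 / (3 * sqrt 6) * (sqrt (x\<^sup>2 + y\<^sup>2) ^ 3 - y * (y\<^sup>2 - 3 * x\<^sup>2))"
    using trigonal_cubic_le[where x = x and y = y] by simp
  then show ?thesis using fabc_polar_decomposition[of a b c x y] by linarith
qed

lemma fabc_eq_on_axis_iff:
  assumes "b \<noteq> 0"
  shows "fabc a b c (x, y) = fabc a b c (0, sqrt (x\<^sup>2 + y\<^sup>2))
     \<longleftrightarrow> y * (y\<^sup>2 - 3 * x\<^sup>2) = sqrt (x\<^sup>2 + y\<^sup>2) ^ 3"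
  using assms fabc_polar_decomposition[of a b c x y] by auto

lemma pd1_fabc:
  "pd1 (fabc a b c) = (\<lambda>(x, y). - a\<^sup>2 * x + c\<^sup>2 * (x\<^sup>2 + y\<^sup>2) * x + 2 * (b\<^sup>2 / sqrt 6) * x * y)"
proof (intro ext, clarify)
  fix x y :: real
  have "((\<lambda>t. fabc a b c (t, y)) has_real_derivative
      - a\<^sup>2 * x + c\<^sup>2 * (x\<^sup>2 + y\<^sup>2) * x + 2 * (b\<^sup>2 / sqrt 6) * x * y) (at x)"
    unfolding fabc_def by (auto intro!: derivative_eq_intros simp: power2_eq_square field_simps)
  then show "pd1 (fabc a b c) (x, y) = - a\<^sup>2 * x + c\<^sup>2 * (x\<^sup>2 + y\<^sup>2) * x + 2 * (b\<^sup>2 / sqrt 6) * x * y"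
    unfolding pd1_def by (simp add: DERIV_imp_deriv)
qed

lemma pd2_fabc:
  "pd2 (fabc a b c) = (\<lambda>(x, y). - a\<^sup>2 * y + c\<^sup>2 * (x\<^sup>2 + y\<^sup>2) * y - b\<^sup>2 / sqrt 6 * (y\<^sup>2 - x\<^sup>2))"
proof (intro ext, clarify)
  fix x y :: real
  have "((\<lambda>t. fabc a b c (x, t)) has_real_derivative
      - a\<^sup>2 * y + c\<^sup>2 * (x\<^sup>2 + y\<^sup>2) * y - b\<^sup>2 / sqrt 6 * (y\<^sup>2 - x\<^sup>2)) (at y)"
    unfolding fabc_def by (auto intro!: derivative_eq_intros simp: power2_eq_square field_simps)
  then show "pd2 (fabc a b c) (x, y) = - a\<^sup>2 * y + c\<^sup>2 * (x\<^sup>2 + y\<^sup>2) * y - b\<^sup>2 / sqrt 6 * (y\<^sup>2 - x\<^sup>2)"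
    unfolding pd2_def by (simp add: DERIV_imp_deriv)
qed

lemma hessian_fabc:
  fixes x y :: real
  shows "hessian (fabc a b c) (x, y) 1 1 = - a\<^sup>2 + c\<^sup>2 * (3 * x\<^sup>2 + y\<^sup>2) + 2 * (b\<^sup>2 / sqrt 6) * y"
    and "hessian (fabc a b c) (x, y) 1 2 = 2 * x * (c\<^sup>2 * y + b\<^sup>2 / sqrt 6)"
    and "hessian (fabc a b c) (x, y) 2 1 = 2 * x * (c\<^sup>2 * y + b\<^sup>2 / sqrt 6)"
    and "hessian (fabc a b c) (x, y) 2 2 = - a\<^sup>2 + c\<^sup>2 * (x\<^sup>2 + 3 * y\<^sup>2) - 2 * (b\<^sup>2 / sqrt 6) * y"
proof -
  have d11: "((\<lambda>t. pd1 (fabc a b c) (t, y)) has_real_derivative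
      - a\<^sup>2 + c\<^sup>2 * (3 * x\<^sup>2 + y\<^sup>2) + 2 * (b\<^sup>2 / sqrt 6) * y) (at x)"
    unfolding pd1_fabc by (auto intro!: derivative_eq_intros simp: power2_eq_square field_simps)
  have d12: "((\<lambda>t. pd2 (fabc a b c) (t, y)) has_real_derivative
      2 * x * (c\<^sup>2 * y + b\<^sup>2 / sqrt 6)) (at x)"
    unfolding pd2_fabc by (auto intro!: derivative_eq_intros simp: power2_eq_square field_simps)
  have d21: "((\<lambda>t. pd1 (fabc a b c) (x, t)) has_real_derivative
      2 * x * (c\<^sup>2 * y + b\<^sup>2 / sqrt 6)) (at y)"
    unfolding pd1_fabc by (auto intro!: derivative_eq_intros simp: power2_eq_square field_simps)
  have d22: "((\<lambda>t. pd2 (fabc a b c) (x, t)) has_real_derivative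
      - a\<^sup>2 + c\<^sup>2 * (x\<^sup>2 + 3 * y\<^sup>2) - 2 * (b\<^sup>2 / sqrt 6) * y) (at y)"
    unfolding pd2_fabc by (auto intro!: derivative_eq_intros simp: power2_eq_square field_simps)
  show "hessian (fabc a b c) (x, y) 1 1 = - a\<^sup>2 + c\<^sup>2 * (3 * x\<^sup>2 + y\<^sup>2) + 2 * (b\<^sup>2 / sqrt 6) * y"
    using DERIV_imp_deriv[OF d11] by (simp add: hessian_def pd1_def)
  show "hessian (fabc a b c) (x, y) 1 2 = 2 * x * (c\<^sup>2 * y + b\<^sup>2 / sqrt 6)"
    using DERIV_imp_deriv[OF d12] by (simp add: hessian_def pd1_def)
  show "hessian (fabc a b c) (x, y) 2 1 = 2 * x * (c\<^sup>2 * y + b\<^sup>2 / sqrt 6)"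
    using DERIV_imp_deriv[OF d21] by (simp add: hessian_def pd2_def)
  show "hessian (fabc a b c) (x, y) 2 2 = - a\<^sup>2 + c\<^sup>2 * (x\<^sup>2 + 3 * y\<^sup>2) - 2 * (b\<^sup>2 / sqrt 6) * y"
    using DERIV_imp_deriv[OF d22] by (simp add: hessian_def pd2_def)
qed

lemma hessian_pos_def_if_minors_pos:
  assumes "0 < hessian g p 1 1"
    and "(hessian g p 1 2)\<^sup>2 < hessian g p 1 1 * hessian g p 2 2"
    and "hessian g p 2 1 = hessian g p 1 2"
  shows "hessian_pos_def g p"
  unfolding hessian_pos_def_def
proof (intro allI impI)
  fix v :: "nat \<Rightarrow> real"
  assume v: "(v 1, v 2) \<noteq> (0, 0)"
  define h11 h12 h22 where "h11 = hessian g p 1 1" and "h12 = hessian g p 1 2"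
    and "h22 = hessian g p 2 2"
  have "h11 * (h11 * (v 1)\<^sup>2 + 2 * h12 * v 1 * v 2 + h22 * (v 2)\<^sup>2)
      = (h11 * v 1 + h12 * v 2)\<^sup>2 + (h11 * h22 - h12\<^sup>2) * (v 2)\<^sup>2"
    by (simp add: power2_eq_square algebra_simps)
  also have "\<dots> > 0"
  proof (cases "v 2 = 0")
    case True
    with v assms(1) show ?thesis by (simp add: h11_def)
  next
    case False
    with assms(2) have "0 < (h11 * h22 - h12\<^sup>2) * (v 2)\<^sup>2" by (simp add: h11_def h12_def h22_def)
    then show ?thesis by (simp add: add_nonneg_pos)
  qed
  finally have "0 < h11 * (v 1)\<^sup>2 + 2 * h12 * v 1 * v 2 + h22 * (v 2)\<^sup>2"
    using assms(1) by (simp add: h11_def zero_less_mult_iff)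
  then show "(\<Sum>i\<in>{1,2}. \<Sum>j\<in>{1,2}. v i * hessian g p i j * v j) > 0"
    using assms(3) by (simp add: h11_def h12_def h22_def power2_eq_square algebra_simps)
qed

lemma quartic_factorization:
  fixes A C K q r :: real
  assumes "A = C * q\<^sup>2 - 3 * K * q"
  shows "(- A / 2 * r\<^sup>2 + C / 4 * r ^ 4 - K * r ^ 3) - (- A / 2 * q\<^sup>2 + C / 4 * q ^ 4 - K * q ^ 3)
     = (r - q)\<^sup>2 * (C / 4 * r\<^sup>2 + (C * q / 2 - K) * (r + q / 2))"
  unfolding assms
  by (simp add: field_simps power2_eq_square power3_eq_cube power4_eq_xxxx; simp add: algebra_simps)

lemma fabc_on_axis: "fabc a b c (0, r) = - a\<^sup>2 / 2 * r\<^sup>2 + c\<^sup>2 / 4 * r ^ 4 - b\<^sup>2 / (3 * sqrt 6) * r ^ 3"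
  by (simp add: fabc_def power3_eq_cube power4_eq_xxxx power2_eq_square)

locale fabc_critical_radius =
  fixes a b c q :: real
  assumes b_nonzero: "b \<noteq> 0" and c_nonzero: "c \<noteq> 0" and q_pos: "0 < q"
    and critical: "a\<^sup>2 = c\<^sup>2 * q\<^sup>2 - b\<^sup>2 / sqrt 6 * q"
    \<comment> \<open>\<open>q\<close> is a critical point of \<open>r \<mapsto> fabc a b c (0, r)\<close>, whose derivative is
      \<open>r (-a\<^sup>2 + c\<^sup>2 r\<^sup>2 - b\<^sup>2 r/\<surd>6)\<close>\<close>
begin

lemma trigonal_coeff_le: "b\<^sup>2 / sqrt 6 \<le> c\<^sup>2 * q"
proof -
  have "b\<^sup>2 / sqrt 6 * q \<le> (c\<^sup>2 * q) * q"
    using critical zero_le_power2[of a] by (simp add: power2_eq_square)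
  then show ?thesis by (rule mult_right_le_imp_le[OF _ q_pos])
qed

lemma axis_profile_factorization:
  "fabc a b c (0, r) - fabc a b c (0, q)
     = (r - q)\<^sup>2 * (c\<^sup>2 / 4 * r\<^sup>2 + (c\<^sup>2 * q / 2 - b\<^sup>2 / (3 * sqrt 6)) * (r + q / 2))"
  unfolding fabc_on_axis using critical by (intro quartic_factorization) simp

lemma axis_profile_cofactor_pos:
  assumes "0 \<le> r"
  shows "0 < c\<^sup>2 / 4 * r\<^sup>2 + (c\<^sup>2 * q / 2 - b\<^sup>2 / (3 * sqrt 6)) * (r + q / 2)"
proof -
  have "0 < b\<^sup>2 / (3 * sqrt 6)" using b_nonzero by simp
  then have "0 < c\<^sup>2 * q / 2 - b\<^sup>2 / (3 * sqrt 6)" using trigonal_coeff_le by simp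
  moreover have "0 < r + q / 2" using assms q_pos by simp
  ultimately show ?thesis by (simp add: add_nonneg_pos)
qed

lemma axis_profile_ge: "0 \<le> r \<Longrightarrow> fabc a b c (0, q) \<le> fabc a b c (0, r)"
  using axis_profile_factorization[of r] axis_profile_cofactor_pos[of r]
  by (metis diff_ge_0_iff_ge less_imp_le zero_le_mult_iff zero_le_power2)

lemma axis_profile_eq_iff: "0 \<le> r \<Longrightarrow> fabc a b c (0, r) = fabc a b c (0, q) \<longleftrightarrow> r = q"
  using axis_profile_factorization[of r] axis_profile_cofactor_pos[of r] by auto

lemma fabc_ge_min: "fabc a b c (0, q) \<le> fabc a b c p"
proof -
  obtain x y where p: "p = (x, y)" by fastforce
  have "fabc a b c (0, q) \<le> fabc a b c (0, sqrt (x\<^sup>2 + y\<^sup>2))" by (simp add: axis_profile_ge)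
  also have "\<dots> \<le> fabc a b c p" unfolding p by (rule fabc_ge_on_axis)
  finally show ?thesis .
qed

lemma fabc_eq_min_iff: "fabc a b c p = fabc a b c (0, q) \<longleftrightarrow> p \<in> triangle_vertices q"
proof -
  obtain x y where p: "p = (x, y)" by fastforce
  define r where "r = sqrt (x\<^sup>2 + y\<^sup>2)"
  have "fabc a b c p = fabc a b c (0, q)
      \<longleftrightarrow> fabc a b c (x, y) = fabc a b c (0, r) \<and> fabc a b c (0, r) = fabc a b c (0, q)"
    using fabc_ge_on_axis[of a b c x y] axis_profile_ge[of r] unfolding p r_def by fastforce
  also have "\<dots> \<longleftrightarrow> y * (y\<^sup>2 - 3 * x\<^sup>2) = r ^ 3 \<and> r = q"
    using fabc_eq_on_axis_iff[OF b_nonzero] axis_profile_eq_iff[of r] unfolding r_def by simp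
  also have "\<dots> \<longleftrightarrow> x\<^sup>2 + y\<^sup>2 = q\<^sup>2 \<and> y * (y\<^sup>2 - 3 * x\<^sup>2) = q ^ 3"
    using q_pos unfolding r_def by (auto simp: real_sqrt_unique)
  also have "\<dots> \<longleftrightarrow> p \<in> triangle_vertices q"
    unfolding p using q_pos by (simp add: trigonal_cubic_eq_on_circle_iff)
  finally show ?thesis .
qed

lemma hessian_pos_def_at_apex: "hessian_pos_def (fabc a b c) (0, q)"
proof -
  define k where "k = b\<^sup>2 / sqrt 6"
  have k_pos: "0 < k" unfolding k_def using b_nonzero by simp
  have k_le: "k \<le> c\<^sup>2 * q" unfolding k_def by (rule trigonal_coeff_le)
  have a2: "a\<^sup>2 = c\<^sup>2 * q\<^sup>2 - k * q" unfolding k_def by (rule critical)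
  note H = hessian_fabc[of a b c, folded k_def]
  have h11: "hessian (fabc a b c) (0, q) 1 1 = 3 * k * q"
    and h12: "hessian (fabc a b c) (0, q) 1 2 = 0" and h21: "hessian (fabc a b c) (0, q) 2 1 = 0"
    and h22: "hessian (fabc a b c) (0, q) 2 2 = q * (2 * c\<^sup>2 * q - k)"
    unfolding H a2 by (simp_all add: power2_eq_square algebra_simps)
  show ?thesis
  proof (rule hessian_pos_def_if_minors_pos)
    show "0 < hessian (fabc a b c) (0, q) 1 1" unfolding h11 using k_pos q_pos by simp
    show "(hessian (fabc a b c) (0, q) 1 2)\<^sup>2
        < hessian (fabc a b c) (0, q) 1 1 * hessian (fabc a b c) (0, q) 2 2"
      unfolding h11 h12 h22 using k_pos k_le q_pos by simp
    show "hessian (fabc a b c) (0, q) 2 1 = hessian (fabc a b c) (0, q) 1 2" unfolding h12 h21 ..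
  qed
qed

lemma hessian_pos_def_at_base:
  assumes x: "x\<^sup>2 = 3 / 4 * q\<^sup>2"
  shows "hessian_pos_def (fabc a b c) (x, - q / 2)"
proof -
  define k where "k = b\<^sup>2 / sqrt 6"
  have k_pos: "0 < k" unfolding k_def using b_nonzero by simp
  have k_le: "k \<le> c\<^sup>2 * q" unfolding k_def by (rule trigonal_coeff_le)
  have a2: "a\<^sup>2 = c\<^sup>2 * q\<^sup>2 - k * q" unfolding k_def by (rule critical)
  note H = hessian_fabc[of a b c, folded k_def]
  have h11: "hessian (fabc a b c) (x, - q / 2) 1 1 = 3 / 2 * c\<^sup>2 * q\<^sup>2"
    and h22: "hessian (fabc a b c) (x, - q / 2) 2 2 = c\<^sup>2 * q\<^sup>2 / 2 + 2 * k * q"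
    and h12: "hessian (fabc a b c) (x, - q / 2) 1 2 = x * (2 * k - c\<^sup>2 * q)"
    and h21: "hessian (fabc a b c) (x, - q / 2) 2 1 = x * (2 * k - c\<^sup>2 * q)"
    unfolding H a2 by (simp_all add: x power_divide algebra_simps)
  show ?thesis
  proof (rule hessian_pos_def_if_minors_pos)
    show "0 < hessian (fabc a b c) (x, - q / 2) 1 1" unfolding h11 using c_nonzero q_pos by simp
    have "(hessian (fabc a b c) (x, - q / 2) 1 2)\<^sup>2 = x\<^sup>2 * (2 * k - c\<^sup>2 * q)\<^sup>2"
      unfolding h12 by (rule power_mult_distrib)
    also have "\<dots> = hessian (fabc a b c) (x, - q / 2) 1 1 * hessian (fabc a b c) (x, - q / 2) 2 2
        - 3 * k * q\<^sup>2 * (2 * c\<^sup>2 * q - k)"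
      unfolding h11 h22 x by (simp add: power2_eq_square algebra_simps)
    also have "\<dots> < hessian (fabc a b c) (x, - q / 2) 1 1 * hessian (fabc a b c) (x, - q / 2) 2 2"
      using k_pos k_le q_pos by simp
    finally show "(hessian (fabc a b c) (x, - q / 2) 1 2)\<^sup>2
        < hessian (fabc a b c) (x, - q / 2) 1 1 * hessian (fabc a b c) (x, - q / 2) 2 2" .
    show "hessian (fabc a b c) (x, - q / 2) 2 1 = hessian (fabc a b c) (x, - q / 2) 1 2"
      unfolding h12 h21 ..
  qed
qed

lemma hessian_pos_def_at_vertices:
  assumes "p \<in> triangle_vertices q"
  shows "hessian_pos_def (fabc a b c) p"
proof -
  have "(sqrt 3 / 2 * q)\<^sup>2 = 3 / 4 * q\<^sup>2" "(- sqrt 3 / 2 * q)\<^sup>2 = 3 / 4 * q\<^sup>2"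
    by (simp_all add: power_mult_distrib power_divide)
  then show ?thesis
    using assms hessian_pos_def_at_apex hessian_pos_def_at_base
    unfolding triangle_vertices_def by blast
qed

end

lemma s_plus_pos:
  assumes "b \<noteq> 0" and "c \<noteq> 0"
  shows "0 < s_plus a b c"
proof -
  have "b\<^sup>2 \<le> sqrt (b ^ 4 + 24 * a\<^sup>2 * c\<^sup>2)"
    by (rule real_le_rsqrt) (simp add: power_mult[symmetric])
  then show ?thesis using assms unfolding s_plus_def by (simp add: add_pos_nonneg)
qed

lemma s_plus_root:
  assumes "c \<noteq> 0"
  shows "2 * c\<^sup>2 * (s_plus a b c)\<^sup>2 - b\<^sup>2 * s_plus a b c - 3 * a\<^sup>2 = 0"
proof -
  define s where "s = s_plus a b c"
  have "(4 * c\<^sup>2 * s - b\<^sup>2)\<^sup>2 = b ^ 4 + 24 * a\<^sup>2 * c\<^sup>2"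
    using assms unfolding s_def s_plus_def by simp
  then have "8 * c\<^sup>2 * (2 * c\<^sup>2 * s\<^sup>2 - b\<^sup>2 * s - 3 * a\<^sup>2) = 0"
    by (simp add: power2_eq_square power4_eq_xxxx algebra_simps)
  then show ?thesis using assms unfolding s_def by simp
qed

lemma fabc_critical_radius_s_plus:
  assumes "b \<noteq> 0" and "c \<noteq> 0"
  shows "fabc_critical_radius a b c (2 * s_plus a b c / sqrt 6)"
proof
  show "0 < 2 * s_plus a b c / sqrt 6" using s_plus_pos[OF assms] by simp
  show "a\<^sup>2 = c\<^sup>2 * (2 * s_plus a b c / sqrt 6)\<^sup>2 - b\<^sup>2 / sqrt 6 * (2 * s_plus a b c / sqrt 6)"
    using s_plus_root[OF assms(2), of a b] by (simp add: power_divide power2_eq_square field_simps)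
qed (use assms in auto)

lemma fabc_on_axis_scaled:
  "fabc a b c (0, 2 * s / sqrt 6)
     = - (a\<^sup>2 / 3) * s\<^sup>2 - (2 * b\<^sup>2 / 27) * s ^ 3 + (c\<^sup>2 / 9) * s ^ 4"
proof -
  have "sqrt 6 ^ 3 = 6 * sqrt 6" and "sqrt 6 ^ 4 = 36"
    by (simp_all add: power3_eq_cube power4_eq_xxxx)
  then show ?thesis
    unfolding fabc_on_axis by (simp add: power_divide power_mult_distrib field_simps)
qed

lemma triangle_vertices_scaled:
  "triangle_vertices (2 * s / sqrt 6)
     = {(0, 2 / sqrt 6 * s), (1 / sqrt 2 * s, - 1 / sqrt 6 * s), (- 1 / sqrt 2 * s, - 1 / sqrt 6 * s)}"
proof -
  have "sqrt 3 / 2 * (2 * s / sqrt 6) = 1 / sqrt 2 * s"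
    and "- sqrt 3 / 2 * (2 * s / sqrt 6) = - 1 / sqrt 2 * s"
    using real_sqrt_mult[of 2 3] by (simp_all add: field_simps)
  moreover have "- (2 * s / sqrt 6) / 2 = - 1 / sqrt 6 * s" by simp
  ultimately show ?thesis unfolding triangle_vertices_def by (simp only:) simp
qed

theorem mainTheorem12:
  fixes a b c :: real
  assumes "a^2 \<ge> 0" and "b^2 > 0" and "c^2 > 0"
  defines "f \<equiv> fabc a b c" and "s \<equiv> s_plus a b c"
  defines "m \<equiv> - (a^2 / 3) * s^2 - (2 * b^2 / 27) * s^3 + (c^2 / 9) * s^4"
  shows "(\<forall>p. f p \<ge> m)
       \<and> {p. f p = m} = {(0, 2 / sqrt 6 * s), (1 / sqrt 2 * s, - 1 / sqrt 6 * s),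
                        (- 1 / sqrt 2 * s, - 1 / sqrt 6 * s)}
       \<and> (\<forall>p\<in>{p. f p = m}. hessian_pos_def f p)"
proof -
  have "b \<noteq> 0" and "c \<noteq> 0" using assms(2,3) by auto
  then interpret fabc_critical_radius a b c "2 * s / sqrt 6"
    unfolding s_def by (rule fabc_critical_radius_s_plus)
  have m: "m = f (0, 2 * s / sqrt 6)"
    unfolding m_def f_def fabc_on_axis_scaled ..
  have minimisers: "{p. f p = m} = triangle_vertices (2 * s / sqrt 6)"
    unfolding m f_def using fabc_eq_min_iff by blast
  show ?thesis
    unfolding minimisers triangle_vertices_scaled[symmetric]
    using fabc_ge_min hessian_pos_def_at_vertices unfolding m f_def by blast
qed

end
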